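(* Let $f:V\to W$ be as in the context (with $n+1\ge 4$, $b\neq 0$, $c\neq 0$, and $A$ the companion matrix of the minimal polynomial over $\mathbb{F}_p$ of a primitive element of $\mathrm{GF}(p^n)$). Then the group $$G=\{g\in \mathrm{GL}(V) : (vg)f=(vf)\widehat{g}\ \text{for all } v\in V\}$$ is trivial, i.e. $G=\{1\}$.
   Context: Let $p$ be a prime, $\mathbb{F}=\mathrm{GF}(p)$, and $n\ge 3$. Let $V$ be an $\mathbb{F}$-vector space of dimension $n+1$ with basis $v_0,v_1,\dots,v_n$, and let $U=\langle v_1,\dots,v_n\rangle$. Let $W=\Lambda^2V$ be the exterior square, with ordered basis beginning $v_0\wedge v_1,\dots,v_0\wedge v_n$ and continuing with the $v_i\wedge v_j$, $1\le i<j\le n$ (in a fixed order). Maps are written on the right and vectors are row vectors. For $g\in\mathrm{End}(V)$, $\widehat{g}$ denotes the induced linear map of $W$, $(x\wedge y)\widehat g=(xg)\wedge(yg)$. The linear map $f:V\to W$ has, with respect to these bases, block matrix $\begin{bmatrix} b & c\\ A & 0\end{bmatrix}$, i.e. $v_0f=\sum_{i=1}^n b_i\, v_0\wedge v_i+\sum_{1\le j<k\le n}c_{j,k}\, v_j\wedge v_k$ and $v_if=\sum_{j=1}^n A_{i,j}\, v_0\wedge v_j$ for $1\le i\le n$, where $b\in\mathbb{F}^{n}$ is a nonzero row vector, $c\in\mathbb{F}^{\binom n2}$ is a nonzero row vector, and $A$ is the $n\times n$ companion matrix of the minimal polynomial $m$ over $\mathbb{F}$ of a primitive element $\alpha$ (generator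 of the multiplicative group) of $\mathrm{GF}(p^n)$. *)

theory Defs
  imports "Jordan_Normal_Form.Matrix" "HOL-Computational_Algebra.Polynomial"
begin

text \<open>V = F^(n+1) with basis v_0,...,v_n (indices 0..n); vectors are row
vectors (JNF vectors of dimension n+1) and matrices act on the right.
W = Lambda^2 V is represented by coordinate functions on the index pairs (j,k),
0 <= j < k <= n, the coordinate at (j,k) being the coefficient of v_j wedge v_k.\<close>

definition wpairs :: "nat \<Rightarrow> (nat \<times> nat) set" where
  "wpairs n = {(j,k). j < k \<and> k \<le> n}"

definition rmult :: "'a::comm_ring_1 vec \<Rightarrow> 'a mat \<Rightarrow> 'a vec" where
  "rmult v g = vec (dim_col g) (\<lambda>j. \<Sum>i<dim_vec v. v $ i * g $$ (i, j))"

definition wedge :: "'a::comm_ring_1 vec \<Rightarrow> 'a vec \<Rightarrow> nat \<times> nat \<Rightarrow> 'a" where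
  "wedge x y = (\<lambda>(k,l). x $ k * y $ l - x $ l * y $ k)"

definition hat :: "nat \<Rightarrow> 'a::comm_ring_1 mat \<Rightarrow> (nat \<times> nat \<Rightarrow> 'a) \<Rightarrow> (nat \<times> nat \<Rightarrow> 'a)" where
  "hat n g w = (\<lambda>kl. \<Sum>(i,j)\<in>wpairs n. w (i,j) * wedge (row g i) (row g j) kl)"

text \<open>The map f : V -> W with block matrix [b c; A 0]. Here b is indexed by 1..n
(b i = b_i), A is an n x n JNF matrix with A $$ (i-1,j-1) = A_{i,j}, and
c j k = c_{j,k} for 1 <= j < k <= n.\<close>
definition fmap :: "nat \<Rightarrow> (nat \<Rightarrow> 'a::comm_ring_1) \<Rightarrow> (nat \<Rightarrow> nat \<Rightarrow> 'a) \<Rightarrow> 'a mat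
     \<Rightarrow> 'a vec \<Rightarrow> (nat \<times> nat \<Rightarrow> 'a)" where
  "fmap n b c A v = (\<lambda>(j,k).
     if j = 0 then v $ 0 * b k + (\<Sum>i\<in>{1..n}. v $ i * A $$ (i - 1, k - 1))
     else v $ 0 * c j k)"

text \<open>Companion matrix (row-vector convention) of a monic polynomial m of degree n:
row i (0-based, i < n-1) is the unit vector e_(i+1), and the last row is
(-m_0, ..., -m_(n-1)).\<close>
definition companion_mat :: "'a::comm_ring_1 poly \<Rightarrow> 'a mat" where
  "companion_mat m = (let n = degree m in
     mat n n (\<lambda>(i,j). if i + 1 < n then (if j = i + 1 then 1 else 0)
                      else - coeff m j))"

definition primitive_element :: "'b::field \<Rightarrow> bool" where
  "primitive_element \<alpha> \<longleftrightarrow> (\<forall>y. y \<noteq> 0 \<longrightarrow> (\<exists>k::nat. y = \<alpha> ^ k))"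

definition field_embedding :: "('a::field \<Rightarrow> 'b::field) \<Rightarrow> bool" where
  "field_embedding e \<longleftrightarrow> e 1 = 1 \<and> (\<forall>x y. e (x + y) = e x + e y) \<and> (\<forall>x y. e (x * y) = e x * e y)"

definition is_min_poly :: "('a::field \<Rightarrow> 'b::field) \<Rightarrow> 'b \<Rightarrow> 'a poly \<Rightarrow> bool" where
  "is_min_poly e \<alpha> m \<longleftrightarrow> lead_coeff m = 1 \<and> poly (map_poly e m) \<alpha> = 0 \<and>
     (\<forall>q. q \<noteq> 0 \<longrightarrow> poly (map_poly e q) \<alpha> = 0 \<longrightarrow> degree m \<le> degree q)"

end

theory Submission
  imports Defs "Jordan_Normal_Form.Determinant" "Jordan_Normal_Form.Char_Poly" "HOL-Library.FuncSet"
begin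

text \<open>
  Write g in block form [a r; s D] with respect to V = \<langle>v_0\<rangle> \<oplus> U and evaluate
  the equivariance on the basis vectors v_i.
  (1) The coordinates at v_j \<and> v_k (j, k \<ge> 1) say r \<and> (C D)_i = s_i c, C the companion matrix
      of the minimal polynomial m of \<alpha>.  If r \<noteq> 0 all rows of C D, hence of D, lie in one
      plane containing r, so g has rank at most 3 < n + 1.  Thus r = 0, and then s = 0 as c \<noteq> 0.
  (2) The coordinates at v_0 \<and> v_k then say D C = a C D and b D = b.
  (3) Identify GF(p)^n with GF(p^n) through the power basis 1, \<alpha>, ..., \<alpha>^(n-1) (deg m = n by
      counting).  Right multiplication by C becomes multiplication by \<alpha>, and D becomes an
      additive map T with a T(\<alpha> x) = \<alpha> T(x).  As \<alpha> generates the multiplicative group and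
      1, \<alpha> are independent over GF(p), this forces a = 1 and T = id, i.e. D = I and g = 1.
  The file develops, in this order: the power basis of \<alpha>; the rigidity of twisted additive
  maps and of the companion matrix; the rank and wedge linear algebra; the coordinate form
  of equivariance; the three steps; the theorem.
\<close>

lemma field_embedding_field_hom:
  assumes "field_embedding e"
  shows "field_hom e"
proof -
  have hom: "e (x + y) = e x + e y" "e (x * y) = e x * e y" "e 1 = 1" for x y
    using assms unfolding field_embedding_def by auto
  have "e 0 = 0" using hom(1)[of 0 0] by (metis add_cancel_right_right add_0)
  then show ?thesis by unfold_locales (auto simp: hom)
qed

lemma poly_as_sum_below:
  fixes p :: "'a::comm_semiring_1 poly"
  assumes "\<And>i. d \<le> i \<Longrightarrow> coeff p i = 0"
  shows "poly p x = (\<Sum>i<d. coeff p i * x ^ i)"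
proof -
  let ?S = "{..<d} \<union> {..degree p}"
  have "poly p x = (\<Sum>i\<in>?S. coeff p i * x ^ i)"
    unfolding poly_altdef by (rule sum.mono_neutral_left) (auto simp: coeff_eq_0)
  also have "\<dots> = (\<Sum>i<d. coeff p i * x ^ i)"
    by (rule sum.mono_neutral_right) (auto simp: assms)
  finally show ?thesis .
qed

definition basis_comb :: "('a::field \<Rightarrow> 'b::field) \<Rightarrow> 'b \<Rightarrow> nat \<Rightarrow> (nat \<Rightarrow> 'a) \<Rightarrow> 'b" where
  "basis_comb e \<alpha> d u = (\<Sum>j<d. e (u j) * \<alpha> ^ j)"

text \<open>The row vector u C for the companion matrix C of a monic polynomial with coefficients mc
  of degree d (see row_times_companion below).\<close>
definition companion_shift :: "(nat \<Rightarrow> 'a::comm_ring_1) \<Rightarrow> nat \<Rightarrow> (nat \<Rightarrow> 'a) \<Rightarrow> nat \<Rightarrow> 'a" where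
  "companion_shift mc d u j = (if j = 0 then 0 else u (j - 1)) - u (d - 1) * mc j"

context field_hom
begin

lemma basis_comb_cong: "(\<And>j. j < d \<Longrightarrow> u j = v j) \<Longrightarrow> basis_comb hom \<alpha> d u = basis_comb hom \<alpha> d v"
  unfolding basis_comb_def by (intro sum.cong) auto

lemma basis_comb_add: "basis_comb hom \<alpha> d (\<lambda>j. u j + v j) = basis_comb hom \<alpha> d u + basis_comb hom \<alpha> d v"
  by (simp add: basis_comb_def hom_add distrib_right sum.distrib)

lemma basis_comb_diff: "basis_comb hom \<alpha> d (\<lambda>j. u j - v j) = basis_comb hom \<alpha> d u - basis_comb hom \<alpha> d v"
  by (simp add: basis_comb_def hom_minus left_diff_distrib sum_subtractf)

lemma basis_comb_smult: "basis_comb hom \<alpha> d (\<lambda>j. c * u j) = hom c * basis_comb hom \<alpha> d u"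
  by (simp add: basis_comb_def hom_mult sum_distrib_left mult.assoc)

lemma basis_comb_unit:
  assumes "k < d"
  shows "basis_comb hom \<alpha> d (\<lambda>j. if j = k then 1 else 0) = \<alpha> ^ k"
proof -
  have "basis_comb hom \<alpha> d (\<lambda>j. if j = k then 1 else 0) = (\<Sum>j<d. if j = k then \<alpha> ^ j else 0)"
    unfolding basis_comb_def by (intro sum.cong) auto
  then show ?thesis using assms by simp
qed

lemma min_poly_minimal:
  assumes "is_min_poly hom \<alpha> m" and "q \<noteq> 0" and "poly (map_poly hom q) \<alpha> = 0"
  shows "degree m \<le> degree q"
  using assms unfolding is_min_poly_def by simp

lemma poly_map_poly_Poly: "poly (map_poly hom (Poly (map u [0..<d]))) \<alpha> = basis_comb hom \<alpha> d u"
  by (subst poly_as_sum_below[of d]) (auto simp: basis_comb_def nth_default_def)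

lemma min_poly_independent:
  assumes min: "is_min_poly hom \<alpha> m" and d: "d \<le> degree m"
    and zero: "basis_comb hom \<alpha> d u = 0" and j: "j < d"
  shows "u j = 0"
proof (rule ccontr)
  assume nz: "u j \<noteq> 0"
  define q where "q = Poly (map u [0..<d])"
  have coeff_q: "coeff q i = (if i < d then u i else 0)" for i
    by (simp add: q_def nth_default_def)
  have "q \<noteq> 0" using nz j coeff_q[of j] by auto
  moreover have "poly (map_poly hom q) \<alpha> = 0" using zero by (simp add: q_def poly_map_poly_Poly)
  ultimately have "degree m \<le> degree q" by (rule min_poly_minimal[OF min])
  moreover have "degree q < d" using j by (intro degree_lessI) (auto simp: coeff_q)
  ultimately show False using d by simp
qed

lemma basis_comb_inj:
  assumes "is_min_poly hom \<alpha> m" and "d \<le> degree m"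
    and "basis_comb hom \<alpha> d u = basis_comb hom \<alpha> d v" and "j < d"
  shows "u j = v j"
  using min_poly_independent[OF assms(1,2), of "\<lambda>j. u j - v j" j] assms(3,4)
  by (simp add: basis_comb_diff)

lemma min_poly_one_alpha_independent:
  assumes min: "is_min_poly hom \<alpha> m" and deg: "2 \<le> degree m"
    and zero: "hom x + hom y * \<alpha> = 0"
  shows "x = 0 \<and> y = 0"
proof -
  define u where "u j = x * (if j = 0 then 1 else 0) + y * (if j = 1 then 1 else 0)" for j :: nat
  have "basis_comb hom \<alpha> 2 u = hom x + hom y * \<alpha>"
    unfolding u_def basis_comb_add basis_comb_smult by (simp add: basis_comb_unit)
  then have "basis_comb hom \<alpha> 2 u = 0" using zero by simp
  from min_poly_independent[OF min deg this, of 0] min_poly_independent[OF min deg this, of 1]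
  show ?thesis by (simp add: u_def)
qed

lemma min_poly_relation:
  assumes "is_min_poly hom \<alpha> m"
  shows "\<alpha> ^ degree m = - basis_comb hom \<alpha> (degree m) (coeff m)"
proof -
  have "0 = poly (map_poly hom m) \<alpha>" using assms unfolding is_min_poly_def by simp
  also have "\<dots> = (\<Sum>i<Suc (degree m). hom (coeff m i) * \<alpha> ^ i)"
    by (simp add: poly_altdef lessThan_Suc_atMost)
  also have "\<dots> = basis_comb hom \<alpha> (degree m) (coeff m) + \<alpha> ^ degree m"
    using assms unfolding is_min_poly_def basis_comb_def by simp
  finally show ?thesis by (simp add: eq_neg_iff_add_eq_0 add.commute)
qed

lemma basis_comb_shift:
  assumes rel: "\<alpha> ^ d = - basis_comb hom \<alpha> d mc" and d: "0 < d"
  shows "basis_comb hom \<alpha> d (companion_shift mc d u) = \<alpha> * basis_comb hom \<alpha> d u"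
proof -
  obtain d' where d': "d = Suc d'" using d by (cases d) auto
  have "basis_comb hom \<alpha> d (companion_shift mc d u)
      = basis_comb hom \<alpha> d (\<lambda>j. (if j = 0 then 0 else u (j - 1)) - u d' * mc j)"
    by (rule basis_comb_cong) (simp add: companion_shift_def d')
  also have "\<dots> = (\<Sum>j<d'. hom (u j) * \<alpha> ^ Suc j) + hom (u d') * \<alpha> ^ d"
  proof -
    have "basis_comb hom \<alpha> d (\<lambda>j. if j = 0 then 0 else u (j - 1)) = (\<Sum>j<d'. hom (u j) * \<alpha> ^ Suc j)"
      unfolding basis_comb_def d' sum.lessThan_Suc_shift by simp
    moreover have "basis_comb hom \<alpha> d mc = - (\<alpha> ^ d)" using rel by simp
    ultimately show ?thesis by (simp add: basis_comb_diff basis_comb_smult)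
  qed
  also have "\<dots> = \<alpha> * basis_comb hom \<alpha> d u"
    by (simp add: basis_comb_def d' sum_distrib_left distrib_left mult.left_commute)
  finally show ?thesis .
qed

text \<open>A monic polynomial of degree 0 is 1, which has no roots.\<close>
lemma min_poly_degree_pos:
  assumes "is_min_poly hom \<alpha> m"
  shows "0 < degree m"
proof (rule ccontr)
  assume "\<not> 0 < degree m"
  then have "m = 1" using assms unfolding is_min_poly_def
    by (metis degree_0_id gr0I one_poly_eq_simps(1))
  then show False using assms unfolding is_min_poly_def by simp
qed

lemma min_poly_spans:
  assumes min: "is_min_poly hom \<alpha> m" and prim: "primitive_element \<alpha>"
  shows "\<exists>u. basis_comb hom \<alpha> (degree m) u = y"
proof -
  let ?d = "degree m"
  have d: "0 < ?d" by (rule min_poly_degree_pos[OF min])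
  have powers: "\<exists>u. basis_comb hom \<alpha> ?d u = \<alpha> ^ k" for k
  proof (induction k)
    case 0
    show ?case using basis_comb_unit[OF d] by auto
  next
    case (Suc k)
    then obtain u where "basis_comb hom \<alpha> ?d u = \<alpha> ^ k" by blast
    then show ?case
      using basis_comb_shift[OF min_poly_relation[OF min] d, of u] by auto
  qed
  show ?thesis
  proof (cases "y = 0")
    case True
    then show ?thesis by (intro exI[of _ "\<lambda>_. 0"]) (simp add: basis_comb_def)
  next
    case False
    then obtain k where "y = \<alpha> ^ k" using prim unfolding primitive_element_def by blast
    then show ?thesis using powers by blast
  qed
qed

lemma min_poly_const_coeff:
  assumes min: "is_min_poly hom \<alpha> m" and deg: "2 \<le> degree m"
  shows "coeff m 0 \<noteq> 0"
proof
  assume c0: "coeff m 0 = 0"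
  obtain a q where mq: "m = pCons a q" by (cases m)
  with c0 have m: "m = pCons 0 q" by simp
  have q: "q \<noteq> 0" "degree q < degree m" using deg unfolding m by auto
  have "0 = poly (map_poly hom m) \<alpha>" using min unfolding is_min_poly_def by simp
  also have "\<dots> = \<alpha> * poly (map_poly hom q) \<alpha>" unfolding m map_poly_pCons_hom by simp
  finally have root: "\<alpha> * poly (map_poly hom q) \<alpha> = 0" by simp
  have "\<alpha> \<noteq> 0"
  proof
    assume "\<alpha> = 0"
    then have "poly (map_poly hom [:0, 1 :: 'a:]) \<alpha> = 0" by simp
    from min_poly_minimal[OF min _ this] show False using deg by simp
  qed
  with root have "poly (map_poly hom q) \<alpha> = 0" by simp
  with q(1) have "degree m \<le> degree q" by (rule min_poly_minimal[OF min])
  with q(2) show False by simp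
qed

end

lemma card_field_gt_1: "1 < card (UNIV :: 'a::{finite,field} set)"
proof -
  have "card {0, 1 :: 'a} \<le> card (UNIV :: 'a set)" by (rule card_mono) auto
  then show ?thesis by simp
qed

text \<open>Counting argument: GF(p^n) has p^n elements, so the minimal polynomial of a
  primitive element over GF(p) has degree n.\<close>
lemma degree_min_poly:
  fixes e :: "'a::{finite,field} \<Rightarrow> 'b::{finite,field}"
  assumes hom: "field_hom e" and prim: "primitive_element \<alpha>" and min: "is_min_poly e \<alpha> m"
    and card: "card (UNIV :: 'b set) = card (UNIV :: 'a set) ^ n"
  shows "degree m = n"
proof -
  interpret field_hom e by (rule hom)
  let ?d = "degree m"
  let ?cube = "\<lambda>k. PiE {..<k} (\<lambda>_. UNIV :: 'a set)"
  have card_cube: "card (?cube k) = card (UNIV :: 'a set) ^ k" for k by (simp add: card_PiE)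
  have q: "1 < card (UNIV :: 'a set)" by (rule card_field_gt_1)
  have "UNIV \<subseteq> basis_comb e \<alpha> ?d ` ?cube ?d"
  proof
    fix y :: 'b
    obtain u where u: "basis_comb e \<alpha> ?d u = y" using min_poly_spans[OF min prim] by blast
    have "basis_comb e \<alpha> ?d (restrict u {..<?d}) = basis_comb e \<alpha> ?d u"
      by (rule basis_comb_cong) simp
    with u have "y = basis_comb e \<alpha> ?d (restrict u {..<?d})" by simp
    moreover have "restrict u {..<?d} \<in> ?cube ?d" by simp
    ultimately show "y \<in> basis_comb e \<alpha> ?d ` ?cube ?d" by (rule image_eqI)
  qed
  then have "card (UNIV :: 'b set) \<le> card (basis_comb e \<alpha> ?d ` ?cube ?d)"
    by (intro card_mono) simp_all
  also have "\<dots> \<le> card (?cube ?d)" by (rule card_image_le) (simp add: finite_PiE)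
  finally have "card (UNIV :: 'b set) \<le> card (?cube ?d)" .
  then have lower: "n \<le> ?d" using card q by (simp add: card_cube power_increasing_iff)
  have "\<not> Suc n \<le> ?d"
  proof
    assume le: "Suc n \<le> ?d"
    have "inj_on (basis_comb e \<alpha> (Suc n)) (?cube (Suc n))"
    proof (rule inj_onI)
      fix u v assume "u \<in> ?cube (Suc n)" "v \<in> ?cube (Suc n)"
        and "basis_comb e \<alpha> (Suc n) u = basis_comb e \<alpha> (Suc n) v"
      then show "u = v" by (intro PiE_ext[of u "{..<Suc n}"]) (auto intro: basis_comb_inj[OF min le])
    qed
    then have "card (?cube (Suc n)) \<le> card (UNIV :: 'b set)" by (simp add: card_inj_on_le)
    then show False using card q by (simp add: card_cube)
  qed
  with lower show ?thesis by simp
qed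

lemma companion_mat_entry:
  assumes "i < degree m" and "j < degree m"
  shows "companion_mat m $$ (i, j) =
    (if i + 1 < degree m then (if j = i + 1 then 1 else 0) else - coeff m j)"
  using assms by (simp add: companion_mat_def Let_def)

lemma row_times_companion:
  assumes l: "l < degree m"
  shows "(\<Sum>t<degree m. u t * companion_mat m $$ (t, l)) = companion_shift (coeff m) (degree m) u l"
proof -
  obtain d' where d': "degree m = Suc d'" using l by (cases "degree m") auto
  have "(\<Sum>t<d'. u t * companion_mat m $$ (t, l)) = (\<Sum>t<d'. if t = l - 1 \<and> l \<noteq> 0 then u t else 0)"
    by (rule sum.cong) (use l d' in \<open>auto simp: companion_mat_entry\<close>)
  also have "\<dots> = (if l = 0 then 0 else u (l - 1))"
    using l d' by (cases l) auto
  finally show ?thesis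
    using l d' by (simp add: companion_shift_def companion_mat_entry)
qed

text \<open>The proof compares T(\<alpha>^k) with T 1 + T \<alpha> where
  1 + \<alpha> = \<alpha>^k, and uses that 1 and \<alpha> are independent over the small field.\<close>
lemma twisted_additive_map_is_scalar:
  fixes e :: "'a::field \<Rightarrow> 'b::field" and T :: "'b \<Rightarrow> 'b"
  assumes hom: "field_hom e" and prim: "primitive_element \<alpha>"
    and indep: "\<And>x y. e x + e y * \<alpha> = 0 \<Longrightarrow> x = 0 \<and> y = 0"
    and add: "\<And>x y. T (x + y) = T x + T y"
    and twist: "\<And>x. e a * T (\<alpha> * x) = \<alpha> * T x"
    and nonzero: "T y \<noteq> 0"
  shows "a = 1 \<and> (\<forall>x. T x = x * T 1)"
proof -
  interpret field_hom e by (rule hom)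
  have \<alpha>0: "\<alpha> \<noteq> 0" using indep[of 0 1] by auto
  have T0: "T 0 = 0" using add[of 0 0] by (metis add_cancel_right_right add_0)
  have cover: "x = 0 \<or> (\<exists>k. x = \<alpha> ^ k)" for x
    using prim unfolding primitive_element_def by blast
  have ea: "e a \<noteq> 0"
  proof
    assume "e a = 0"
    then have "T x = 0" for x using twist[of x] \<alpha>0 by simp
    with nonzero show False by blast
  qed
  have powers: "e a ^ k * T (\<alpha> ^ k) = \<alpha> ^ k * T 1" for k
  proof (induction k)
    case (Suc k)
    have "e a ^ Suc k * T (\<alpha> ^ Suc k) = e a ^ k * (e a * T (\<alpha> * \<alpha> ^ k))" by simp
    also have "\<dots> = \<alpha> * (e a ^ k * T (\<alpha> ^ k))" by (simp add: twist mult.left_commute)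
    finally show ?case using Suc by simp
  qed simp
  have T1: "T 1 \<noteq> 0"
  proof
    assume "T 1 = 0"
    then have "T x = 0" for x using cover[of x] powers T0 ea by auto
    with nonzero show False by blast
  qed
  obtain k where k: "1 + \<alpha> = \<alpha> ^ k" using cover[of "1 + \<alpha>"] indep[of 1 1] by auto
  then obtain k' where k': "k = Suc k'" using \<alpha>0 by (cases k) auto
  have "e a ^ k * (T 1 + T \<alpha>) = (1 + \<alpha>) * T 1"
    using powers[of k] k add[of 1 \<alpha>] by simp
  moreover have "e a ^ k * T \<alpha> = e a ^ k' * \<alpha> * T 1"
    using twist[of 1] by (simp add: k' mult.assoc)
  ultimately have "(e (a ^ k - 1) + e (a ^ k' - 1) * \<alpha>) * T 1 = 0"
    by (simp add: hom_distribs algebra_simps)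
  with T1 have "e (a ^ k - 1) + e (a ^ k' - 1) * \<alpha> = 0" by simp
  from indep[OF this] have "a ^ k = 1" "a ^ k' = 1" by simp_all
  then have a1: "a = 1" by (simp add: k')
  have "T x = x * T 1" for x
    using cover[of x] powers T0 a1 by auto
  with a1 show ?thesis by blast
qed

lemma row_twisted_commutation:
  fixes C D :: "nat \<Rightarrow> nat \<Rightarrow> 'a::comm_ring_1"
  assumes comm: "\<And>i l. i < n \<Longrightarrow> l < n \<Longrightarrow> (\<Sum>t<n. D i t * C t l) = a * (\<Sum>q<n. C i q * D q l)"
    and l: "l < n"
  shows "(\<Sum>t<n. (\<Sum>i<n. u i * D i t) * C t l) = a * (\<Sum>t<n. (\<Sum>i<n. u i * C i t) * D t l)"
proof -
  have "(\<Sum>t<n. (\<Sum>i<n. u i * D i t) * C t l) = (\<Sum>t<n. \<Sum>i<n. u i * D i t * C t l)"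
    by (simp add: sum_distrib_right)
  also have "\<dots> = (\<Sum>i<n. u i * (\<Sum>t<n. D i t * C t l))"
    by (subst sum.swap) (simp add: sum_distrib_left mult.assoc)
  also have "\<dots> = (\<Sum>i<n. u i * (a * (\<Sum>q<n. C i q * D q l)))"
    by (rule sum.cong) (simp_all add: comm l)
  also have "\<dots> = a * (\<Sum>q<n. \<Sum>i<n. u i * C i q * D q l)"
    by (subst sum.swap) (simp add: sum_distrib_left mult.assoc mult.left_commute)
  also have "\<dots> = a * (\<Sum>t<n. (\<Sum>i<n. u i * C i t) * D t l)"
    by (simp add: sum_distrib_right)
  finally show ?thesis .
qed

lemma basis_comb_companion:
  assumes hom: "field_hom e" and min: "is_min_poly e \<alpha> m"
  shows "basis_comb e \<alpha> (degree m) (\<lambda>l. \<Sum>t<degree m. u t * companion_mat m $$ (t, l))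
    = \<alpha> * basis_comb e \<alpha> (degree m) u"
proof -
  interpret field_hom e by (rule hom)
  have "basis_comb e \<alpha> (degree m) (\<lambda>l. \<Sum>t<degree m. u t * companion_mat m $$ (t, l))
      = basis_comb e \<alpha> (degree m) (companion_shift (coeff m) (degree m) u)"
    by (rule basis_comb_cong) (simp add: row_times_companion)
  also have "\<dots> = \<alpha> * basis_comb e \<alpha> (degree m) u"
    by (rule basis_comb_shift[OF min_poly_relation[OF min] min_poly_degree_pos[OF min]])
  finally show ?thesis .
qed

text \<open>Transported through the power
  basis 1, \<alpha>, ..., \<alpha>^(n-1), the map u \<mapsto> u D becomes an additive map T of the big field
  with e a * T (\<alpha> x) = \<alpha> * T x and T \<noteq> 0, so the rigidity lemma gives a = 1 and
  T = id, i.e. u D = u for every u.\<close>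
lemma companion_twisted_commutant_acts_trivially:
  fixes e :: "'a::field \<Rightarrow> 'b::field" and D :: "nat \<Rightarrow> nat \<Rightarrow> 'a"
  assumes hom: "field_hom e" and prim: "primitive_element \<alpha>" and min: "is_min_poly e \<alpha> m"
    and n: "degree m = n" "2 \<le> n"
    and comm: "\<And>i l. i < n \<Longrightarrow> l < n \<Longrightarrow>
      (\<Sum>t<n. D i t * companion_mat m $$ (t, l)) = a * (\<Sum>q<n. companion_mat m $$ (i, q) * D q l)"
    and fixed: "\<And>l. l < n \<Longrightarrow> (\<Sum>q<n. w q * D q l) = w l"
    and w: "l0 < n" "w l0 \<noteq> 0"
  shows "a = 1 \<and> (\<forall>u. basis_comb e \<alpha> n (\<lambda>l. \<Sum>t<n. u t * D t l) = basis_comb e \<alpha> n u)"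
proof -
  interpret field_hom e by (rule hom)
  define \<phi> where "\<phi> = basis_comb e \<alpha> n"
  define mD where "mD u = (\<lambda>l. \<Sum>t<n. u t * D t l)" for u
  define mC where "mC u = (\<lambda>l. \<Sum>t<n. u t * companion_mat m $$ (t, l))" for u
  have \<phi>_inj: "u j = v j" if "\<phi> u = \<phi> v" "j < n" for u v j
    using basis_comb_inj[OF min, of n u v j] that n by (simp add: \<phi>_def)
  have \<phi>_surj: "\<exists>u. \<phi> u = x" for x
    using min_poly_spans[OF min prim] n by (simp add: \<phi>_def)
  have \<phi>_mC: "\<phi> (mC u) = \<alpha> * \<phi> u" for u
    using basis_comb_companion[OF hom min, of u] n by (simp add: \<phi>_def mC_def)
  define T where "T x = \<phi> (mD (SOME u. \<phi> u = x))" for x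
  have T_\<phi>: "T (\<phi> u) = \<phi> (mD u)" for u
  proof -
    have "\<phi> (SOME v. \<phi> v = \<phi> u) = \<phi> u" using someI[of "\<lambda>v. \<phi> v = \<phi> u" u] by simp
    then have "mD (SOME v. \<phi> v = \<phi> u) = mD u"
      unfolding mD_def by (intro ext sum.cong) (auto dest: \<phi>_inj)
    then show ?thesis by (simp add: T_def)
  qed
  have T_add: "T (x + y) = T x + T y" for x y
  proof -
    obtain u v where uv: "\<phi> u = x" "\<phi> v = y" using \<phi>_surj by metis
    have "mD (\<lambda>j. u j + v j) = (\<lambda>l. mD u l + mD v l)"
      by (simp add: mD_def distrib_right sum.distrib)
    then have "T (\<phi> (\<lambda>j. u j + v j)) = \<phi> (mD u) + \<phi> (mD v)"
      unfolding T_\<phi> by (simp add: \<phi>_def basis_comb_add)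
    moreover have "\<phi> (\<lambda>j. u j + v j) = x + y" using uv by (simp add: \<phi>_def basis_comb_add)
    ultimately show ?thesis using uv T_\<phi> by metis
  qed
  have T_twist: "e a * T (\<alpha> * x) = \<alpha> * T x" for x
  proof -
    obtain u where u: "\<phi> u = x" using \<phi>_surj by blast
    have "e a * T (\<alpha> * x) = e a * \<phi> (mD (mC u))" using T_\<phi> \<phi>_mC u by metis
    also have "\<dots> = \<phi> (\<lambda>l. a * mD (mC u) l)" by (simp add: \<phi>_def basis_comb_smult)
    also have "\<dots> = \<phi> (mC (mD u))"
      unfolding \<phi>_def mC_def mD_def
      by (rule basis_comb_cong) (simp add: row_twisted_commutation[OF comm])
    also have "\<dots> = \<alpha> * T x" using \<phi>_mC[of "mD u"] T_\<phi>[of u] u by metis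
    finally show ?thesis .
  qed
  have \<phi>w: "\<phi> w \<noteq> 0" using \<phi>_inj[of w "\<lambda>_. 0"] w by (auto simp: \<phi>_def basis_comb_def)
  have "\<phi> (mD w) = \<phi> w" unfolding \<phi>_def mD_def by (rule basis_comb_cong) (simp add: fixed)
  then have T_w: "T (\<phi> w) = \<phi> w" by (simp add: T_\<phi>)
  have "a = 1 \<and> (\<forall>x. T x = x * T 1)"
    by (rule twisted_additive_map_is_scalar[OF hom prim _ T_add T_twist, of "\<phi> w"])
       (use min_poly_one_alpha_independent[OF min] n \<phi>w T_w in auto)
  then have "a = 1" and "T x = x" for x
    using T_w \<phi>w by (metis mult_cancel_left1)+
  then show ?thesis using T_\<phi> by (simp add: \<phi>_def mD_def)
qed

text \<open>Consequently a = 1 and D is the identity matrix (apply u D = u to the unit vectors).\<close>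
lemma companion_twisted_commutant:
  fixes e :: "'a::field \<Rightarrow> 'b::field" and D :: "nat \<Rightarrow> nat \<Rightarrow> 'a"
  assumes hom: "field_hom e" and prim: "primitive_element \<alpha>" and min: "is_min_poly e \<alpha> m"
    and n: "degree m = n" "2 \<le> n"
    and comm: "\<And>i l. i < n \<Longrightarrow> l < n \<Longrightarrow>
      (\<Sum>t<n. D i t * companion_mat m $$ (t, l)) = a * (\<Sum>q<n. companion_mat m $$ (i, q) * D q l)"
    and fixed: "\<And>l. l < n \<Longrightarrow> (\<Sum>q<n. w q * D q l) = w l"
    and w: "l0 < n" "w l0 \<noteq> 0"
  shows "a = 1 \<and> (\<forall>i<n. \<forall>j<n. D i j = (if i = j then 1 else 0))"
proof -
  note trivial = companion_twisted_commutant_acts_trivially[OF assms]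
  have "D i j = (if i = j then 1 else 0)" if ij: "i < n" "j < n" for i j
  proof -
    define \<delta> where "\<delta> t = (if t = i then 1 else 0 :: 'a)" for t
    have "(\<Sum>t<n. \<delta> t * D t j) = D i j"
      using ij by (simp add: \<delta>_def if_distrib[of "\<lambda>x. x * _"] cong: if_cong)
    moreover from trivial
    have eq: "basis_comb e \<alpha> n (\<lambda>l. \<Sum>t<n. \<delta> t * D t l) = basis_comb e \<alpha> n \<delta>" by blast
    have "(\<Sum>t<n. \<delta> t * D t j) = \<delta> j"
      using field_hom.basis_comb_inj[OF hom min _ eq ij(2)] n by simp
    ultimately show ?thesis by (auto simp: \<delta>_def)
  qed
  with trivial show ?thesis by blast
qed

lemma wedge_zero_proportional:
  fixes r x :: "nat \<Rightarrow> 'a::field"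
  assumes k0: "k0 < n" "r k0 \<noteq> 0"
    and wedge: "\<And>k l. k < l \<Longrightarrow> l < n \<Longrightarrow> r k * x l - r l * x k = 0"
    and l: "l < n"
  shows "x l = (x k0 / r k0) * r l"
proof -
  consider "l = k0" | "l < k0" | "k0 < l" by linarith
  then show ?thesis
  proof cases
    case 2
    then have "r l * x k0 - r k0 * x l = 0" using wedge k0 by blast
    then show ?thesis using k0 by (simp add: field_simps)
  next
    case 3
    then have "r k0 * x l - r l * x k0 = 0" using wedge l by blast
    then show ?thesis using k0 by (simp add: field_simps)
  qed (use k0 in simp)
qed

lemma wedge_rows_in_plane:
  fixes R :: "nat \<Rightarrow> nat \<Rightarrow> 'a::field" and r s :: "nat \<Rightarrow> 'a"
  assumes k0: "k0 < n" "r k0 \<noteq> 0"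
    and wedge: "\<And>i k l. i < n \<Longrightarrow> k < l \<Longrightarrow> l < n \<Longrightarrow> r k * R i l - r l * R i k = s i * c k l"
  shows "\<exists>z lf mf. \<forall>i<n. \<forall>l<n. R i l = lf i * r l + mf i * z l"
proof (cases "\<exists>i0<n. s i0 \<noteq> 0")
  case True
  then obtain i0 where i0: "i0 < n" "s i0 \<noteq> 0" by blast
  define lf where "lf i = (s i0 * R i k0 - s i * R i0 k0) / r k0 / s i0" for i
  define mf where "mf i = s i / s i0" for i
  have plane: "R i l = lf i * r l + mf i * R i0 l" if i: "i < n" and l: "l < n" for i l
  proof -
    define x where "x l = s i0 * R i l - s i * R i0 l" for l
    have xw: "r k * x l - r l * x k = 0" if "k < l" "l < n" for k l
    proof -
      have "r k * x l - r l * x k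
          = s i0 * (r k * R i l - r l * R i k) - s i * (r k * R i0 l - r l * R i0 k)"
        by (simp add: x_def algebra_simps)
      then show ?thesis using wedge[OF i that] wedge[OF i0(1) that] by simp
    qed
    from wedge_zero_proportional[of k0 n r x l, OF k0 xw l] have "x l = (x k0 / r k0) * r l" .
    then show ?thesis using i0 k0 by (simp add: x_def lf_def mf_def field_simps)
  qed
  show ?thesis by (intro exI[of _ "R i0"] exI[of _ lf] exI[of _ mf] allI impI) (rule plane)
next
  case False
  have line: "R i l = (R i k0 / r k0) * r l + 0 * 0" if i: "i < n" and l: "l < n" for i l
  proof -
    have "s i = 0" using False i by blast
    then have "r k * R i l - r l * R i k = 0" if "k < l" "l < n" for k l
      using wedge[OF i that] by simp
    from wedge_zero_proportional[of k0 n r "R i" l, OF k0 this l] show ?thesis by simp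
  qed
  show ?thesis
    by (intro exI[of _ "\<lambda>_. 0"] exI[of _ "\<lambda>i. R i k0 / r k0"] exI[of _ "\<lambda>_. 0"] allI impI)
      (rule line)
qed

text \<open>Rows of C D lying in a plane forces the rows of D into the same plane, when C is the
  companion matrix of a polynomial with nonzero constant term (hence invertible).\<close>
lemma companion_preimage_in_plane:
  fixes D :: "nat \<Rightarrow> nat \<Rightarrow> 'a::field"
  assumes n: "degree m = n" and c0: "coeff m 0 \<noteq> 0"
    and rows: "\<And>i l. i < n \<Longrightarrow> l < n \<Longrightarrow>
      (\<Sum>q<n. companion_mat m $$ (i, q) * D q l) = lf i * r l + mf i * z l"
  shows "\<exists>lf' mf'. \<forall>i<n. \<forall>l<n. D i l = lf' i * r l + mf' i * z l"
proof (cases n)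
  case 0
  then show ?thesis by simp
next
  case (Suc n')
  let ?C = "companion_mat m" and ?mc = "coeff m"
  have upper: "D (Suc i) l = lf i * r l + mf i * z l" if i: "i < n'" and l: "l < n" for i l
  proof -
    have "(\<Sum>q<n. ?C $$ (i, q) * D q l) = (\<Sum>q<n. if q = Suc i then D q l else 0)"
      by (rule sum.cong) (use i Suc n in \<open>auto simp: companion_mat_entry\<close>)
    also have "\<dots> = D (Suc i) l" using i Suc by simp
    finally show ?thesis using rows[of i l] i l Suc by (simp del: lessThan_Suc)
  qed
  have last: "?mc 0 * D 0 l + (\<Sum>q<n'. ?mc (Suc q) * D (Suc q) l) = - (lf n' * r l + mf n' * z l)"
    if l: "l < n" for l
  proof -
    have "(\<Sum>q<n. ?C $$ (n', q) * D q l) = (\<Sum>q<n. - (?mc q * D q l))"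
      by (rule sum.cong) (use Suc n in \<open>auto simp: companion_mat_entry\<close>)
    also have "\<dots> = - (?mc 0 * D 0 l + (\<Sum>q<n'. ?mc (Suc q) * D (Suc q) l))"
      unfolding sum_negf Suc sum.lessThan_Suc_shift ..
    finally have "lf n' * r l + mf n' * z l = - (?mc 0 * D 0 l + (\<Sum>q<n'. ?mc (Suc q) * D (Suc q) l))"
      using rows[of n' l] l Suc by simp
    then show ?thesis by (metis minus_minus)
  qed
  define L where "L = lf n' + (\<Sum>q<n'. ?mc (Suc q) * lf q)"
  define M where "M = mf n' + (\<Sum>q<n'. ?mc (Suc q) * mf q)"
  define lf' where "lf' i = (if i = 0 then - L / ?mc 0 else lf (i - 1))" for i
  define mf' where "mf' i = (if i = 0 then - M / ?mc 0 else mf (i - 1))" for i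
  have "D i l = lf' i * r l + mf' i * z l" if i: "i < n" and l: "l < n" for i l
  proof (cases i)
    case 0
    have "(\<Sum>q<n'. ?mc (Suc q) * D (Suc q) l) = (\<Sum>q<n'. ?mc (Suc q) * (lf q * r l + mf q * z l))"
      by (rule sum.cong) (simp_all add: upper l)
    also have "\<dots> = (\<Sum>q<n'. ?mc (Suc q) * lf q) * r l + (\<Sum>q<n'. ?mc (Suc q) * mf q) * z l"
      by (simp add: sum_distrib_right sum.distrib distrib_left mult.assoc)
    finally have "?mc 0 * D 0 l = - L * r l - M * z l"
      using last[OF l] by (simp add: L_def M_def algebra_simps)
    then show ?thesis using c0 0 by (simp add: lf'_def mf'_def field_simps)
  next
    case (Suc i')
    then show ?thesis using upper[of i' l] i l \<open>n = Suc n'\<close> by (simp add: lf'_def mf'_def)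
  qed
  then show ?thesis by blast
qed

lemma det_zero_row:
  fixes A :: "'a::comm_ring_1 mat"
  assumes A: "A \<in> carrier_mat N N" and i: "i < N" and zero: "\<And>j. j < N \<Longrightarrow> A $$ (i, j) = 0"
  shows "det A = 0"
proof -
  have "A = mat\<^sub>r N N (\<lambda>k. if k = i then 0\<^sub>v N else row A k)"
    by (rule eq_matI) (use A zero in auto)
  also have "det \<dots> = 0"
    by (rule det_row_0[OF i]) (use A in auto)
  finally show ?thesis .
qed

lemma invertible_det_nonzero:
  fixes g :: "'a::field mat"
  assumes g: "g \<in> carrier_mat N N" and inv: "invertible_mat g"
  shows "det g \<noteq> 0"
proof -
  obtain B where B: "g * B = 1\<^sub>m N" "B * g = 1\<^sub>m (dim_row B)"
    using inv g unfolding invertible_mat_def inverts_mat_def by auto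
  have "B \<in> carrier_mat N N"
    using arg_cong[OF B(1), of dim_col] arg_cong[OF B(2), of dim_col] g by auto
  from det_mult[OF g this] B(1) have "det g * det B = 1" by simp
  then show ?thesis by auto
qed

lemma rank_le_3_not_invertible:
  fixes g :: "'a::field mat" and C :: "nat \<Rightarrow> nat \<Rightarrow> 'a"
  assumes g: "g \<in> carrier_mat N N" and N: "4 \<le> N"
    and rows: "\<And>i j. i < N \<Longrightarrow> j < N \<Longrightarrow> g $$ (i, j) = C i 0 * y0 j + C i 1 * y1 j + C i 2 * y2 j"
  shows "\<not> invertible_mat g"
proof
  assume inv: "invertible_mat g"
  define Y where "Y = mat N N (\<lambda>(i, j). if i = 0 then y0 j else if i = 1 then y1 j else if i = 2 then y2 j else 0)"
  define Cm where "Cm = mat N N (\<lambda>(i, k). if k < 3 then C i k else 0)"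
  have Y: "Y \<in> carrier_mat N N" and Cm: "Cm \<in> carrier_mat N N" by (auto simp: Y_def Cm_def)
  have "g = Cm * Y"
  proof (rule eq_matI)
    fix i j assume "i < dim_row (Cm * Y)" "j < dim_col (Cm * Y)"
    then have i: "i < N" and j: "j < N" by (auto simp: Cm_def Y_def)
    have "(Cm * Y) $$ (i, j) = (\<Sum>k\<in>{0..<N}. Cm $$ (i, k) * Y $$ (k, j))"
      using i j by (simp add: scalar_prod_def Cm_def Y_def)
    also have "\<dots> = (\<Sum>k\<in>{0..<3}. Cm $$ (i, k) * Y $$ (k, j))"
      by (rule sum.mono_neutral_right) (use N i j in \<open>auto simp: Cm_def\<close>)
    also have "\<dots> = g $$ (i, j)"
      using N i j by (simp add: rows Cm_def Y_def numeral_3_eq_3 numeral_2_eq_2 add.assoc)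
    finally show "g $$ (i, j) = (Cm * Y) $$ (i, j)" by simp
  qed (use g in \<open>auto simp: Cm_def Y_def\<close>)
  moreover have "det Y = 0"
    by (rule det_zero_row[OF Y, of 3]) (use N in \<open>auto simp: Y_def\<close>)
  ultimately have "det g = 0" using det_mult[OF Cm Y] by simp
  with invertible_det_nonzero[OF g inv] show False by simp
qed

definition equivariant :: "nat \<Rightarrow> (nat \<Rightarrow> 'a::comm_ring_1) \<Rightarrow> (nat \<Rightarrow> nat \<Rightarrow> 'a) \<Rightarrow> 'a mat \<Rightarrow> 'a mat \<Rightarrow> bool" where
  "equivariant n b c A g \<longleftrightarrow> (\<forall>v \<in> carrier_vec (n + 1). \<forall>kl \<in> wpairs n.
     fmap n b c A (rmult v g) kl = hat n g (fmap n b c A v) kl)"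

lemma finite_wpairs: "finite (wpairs n)"
  by (rule finite_subset[of _ "{0..n} \<times> {0..n}"]) (auto simp: wpairs_def)

lemma rmult_unit_vec:
  assumes g: "g \<in> carrier_mat N M" and i: "i < N"
  shows "rmult (unit_vec N i) g = row g i"
proof (rule eq_vecI)
  fix j assume "j < dim_vec (row g i)"
  then have j: "j < M" using g by simp
  have "(\<Sum>t<N. unit_vec N i $ t * g $$ (t, j)) = (\<Sum>t<N. if t = i then g $$ (i, j) else 0)"
    by (rule sum.cong) (use i in auto)
  then show "rmult (unit_vec N i) g $ j = row g i $ j"
    using g i j by (simp add: rmult_def)
qed (use g in \<open>simp add: rmult_def\<close>)

lemma rmult_one:
  assumes v: "v \<in> carrier_vec N"
  shows "rmult v (1\<^sub>m N) = v"
proof (rule eq_vecI)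
  fix j assume "j < dim_vec v"
  then have j: "j < N" using v by simp
  have "(\<Sum>i<N. v $ i * 1\<^sub>m N $$ (i, j)) = (\<Sum>i<N. if i = j then v $ j else 0)"
    by (rule sum.cong) (use j in auto)
  then show "rmult v (1\<^sub>m N) $ j = v $ j" using v j by (simp add: rmult_def)
qed (use v in \<open>simp add: rmult_def\<close>)

lemma hat_one:
  assumes kl: "kl \<in> wpairs n"
  shows "hat n (1\<^sub>m (n + 1)) w kl = w kl"
proof -
  obtain k l where kl': "kl = (k, l)" "k < l" "l \<le> n" using kl by (auto simp: wpairs_def)
  have "hat n (1\<^sub>m (n + 1)) w kl = (\<Sum>x\<in>wpairs n. if x = kl then w x else 0)"
    unfolding hat_def
  proof (rule sum.cong)
    fix x assume "x \<in> wpairs n"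
    then obtain i j where x: "x = (i, j)" "i < j" "j \<le> n" by (auto simp: wpairs_def)
    then show "(case x of (i, j) \<Rightarrow> w (i, j) * wedge (row (1\<^sub>m (n + 1)) i) (row (1\<^sub>m (n + 1)) j) kl)
        = (if x = kl then w x else 0)"
      using kl' by (auto simp: wedge_def)
  qed simp
  also have "\<dots> = w kl" using kl finite_wpairs by simp
  finally show ?thesis .
qed

lemma invertible_one_mat: "invertible_mat (1\<^sub>m N :: 'a::semiring_1 mat)"
  unfolding invertible_mat_def inverts_mat_def by (intro conjI exI[of _ "1\<^sub>m N"]) auto

lemma equivariant_one: "equivariant n b c A (1\<^sub>m (n + 1))"
  unfolding equivariant_def by (auto simp: rmult_one hat_one[simplified])

lemma fmap_unit_vec:
  assumes i: "i \<le> n"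
  shows "fmap n b c A (unit_vec (Suc n) i) (p, q) =
    (if p = 0 then (if i = 0 then b q else A $$ (i - 1, q - 1)) else (if i = 0 then c p q else 0))"
proof -
  have "(\<Sum>t\<in>{1..n}. unit_vec (Suc n) i $ t * A $$ (t - 1, q - 1))
      = (\<Sum>t\<in>{1..n}. if t = i then A $$ (i - 1, q - 1) else 0)"
    by (rule sum.cong) (use i in auto)
  then show ?thesis using i by (auto simp: fmap_def)
qed

lemma fmap_row:
  assumes g: "g \<in> carrier_mat (n + 1) (n + 1)" and i: "i \<le> n"
  shows "fmap n b c A (row g i) (k, l) = (if k = 0
    then g $$ (i, 0) * b l + (\<Sum>t<n. g $$ (i, Suc t) * A $$ (t, l - 1)) else g $$ (i, 0) * c k l)"
proof -
  have "(\<Sum>t\<in>{1..n}. row g i $ t * A $$ (t - 1, l - 1)) = (\<Sum>t<n. g $$ (i, Suc t) * A $$ (t, l - 1))"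
    using g i by (simp add: sum.atLeast1_atMost_eq)
  then show ?thesis using g i by (simp add: fmap_def)
qed

lemma equivariant_row:
  assumes eqv: "equivariant n b c A g" and g: "g \<in> carrier_mat (n + 1) (n + 1)"
    and i: "i \<le> n" and kl: "(k, l) \<in> wpairs n"
  shows "fmap n b c A (row g i) (k, l) = (\<Sum>(p, q)\<in>wpairs n.
    fmap n b c A (unit_vec (n + 1) i) (p, q) * (g $$ (p, k) * g $$ (q, l) - g $$ (p, l) * g $$ (q, k)))"
proof -
  have "unit_vec (n + 1) i \<in> carrier_vec (n + 1)" by simp
  with eqv kl have "fmap n b c A (rmult (unit_vec (n + 1) i) g) (k, l)
      = hat n g (fmap n b c A (unit_vec (n + 1) i)) (k, l)"
    unfolding equivariant_def by blast
  then have "fmap n b c A (row g i) (k, l) = hat n g (fmap n b c A (unit_vec (n + 1) i)) (k, l)"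
    using rmult_unit_vec[OF g, of i] i by simp
  also have "\<dots> = (\<Sum>(p, q)\<in>wpairs n.
      fmap n b c A (unit_vec (n + 1) i) (p, q) * (g $$ (p, k) * g $$ (q, l) - g $$ (p, l) * g $$ (q, k)))"
    unfolding hat_def
    by (rule sum.cong) (use g kl in \<open>auto simp: wpairs_def wedge_def\<close>)
  finally show ?thesis .
qed

lemma sum_wpairs_first_row:
  assumes "\<And>p q. (p, q) \<in> wpairs n \<Longrightarrow> p \<noteq> 0 \<Longrightarrow> F p q = 0"
  shows "(\<Sum>(p, q)\<in>wpairs n. F p q) = (\<Sum>q<n. F 0 (Suc q))"
proof -
  have sub: "(\<lambda>q. (0, Suc q)) ` {..<n} \<subseteq> wpairs n" by (auto simp: wpairs_def)
  have "(\<Sum>(p, q)\<in>wpairs n. F p q) = (\<Sum>(p, q)\<in>(\<lambda>q. (0, Suc q)) ` {..<n}. F p q)"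
  proof (rule sum.mono_neutral_right[OF finite_wpairs sub], intro ballI)
    fix x assume x: "x \<in> wpairs n - (\<lambda>q. (0, Suc q)) ` {..<n}"
    then obtain p q where pq: "x = (p, q)" "p < q" "q \<le> n" by (auto simp: wpairs_def)
    have "p \<noteq> 0"
    proof
      assume "p = 0"
      then have "x = (0, Suc (q - 1))" "q - 1 < n" using pq by auto
      with x show False by blast
    qed
    then show "(case x of (p, q) \<Rightarrow> F p q) = 0" using assms x pq by auto
  qed
  also have "\<dots> = (\<Sum>q<n. F 0 (Suc q))" by (subst sum.reindex) (auto simp: inj_on_def)
  finally show ?thesis .
qed

lemma equivariant_wedge_eq:
  assumes eqv: "equivariant n b c A g" and g: "g \<in> carrier_mat (n + 1) (n + 1)"
    and i: "i < n" and kl: "k < l" "l < n"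
  shows "g $$ (Suc i, 0) * c (Suc k) (Suc l) = (\<Sum>q<n. A $$ (i, q) *
    (g $$ (0, Suc k) * g $$ (Suc q, Suc l) - g $$ (0, Suc l) * g $$ (Suc q, Suc k)))"
proof -
  have w: "(Suc k, Suc l) \<in> wpairs n" using kl by (auto simp: wpairs_def)
  have i': "Suc i \<le> n" using i by simp
  have "g $$ (Suc i, 0) * c (Suc k) (Suc l) = fmap n b c A (row g (Suc i)) (Suc k, Suc l)"
    using fmap_row[OF g] i by simp
  also have "\<dots> = (\<Sum>q<n. A $$ (i, q) *
      (g $$ (0, Suc k) * g $$ (Suc q, Suc l) - g $$ (0, Suc l) * g $$ (Suc q, Suc k)))"
    unfolding equivariant_row[OF eqv g i' w] using i'
    by (subst sum_wpairs_first_row) (auto simp: fmap_unit_vec)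
  finally show ?thesis .
qed

lemma equivariant_first_coord_eq:
  assumes eqv: "equivariant n b c A g" and g: "g \<in> carrier_mat (n + 1) (n + 1)"
    and i: "i < n" and l: "l < n"
  shows "g $$ (Suc i, 0) * b (Suc l) + (\<Sum>t<n. g $$ (Suc i, Suc t) * A $$ (t, l))
    = (\<Sum>q<n. A $$ (i, q) * (g $$ (0, 0) * g $$ (Suc q, Suc l) - g $$ (0, Suc l) * g $$ (Suc q, 0)))"
proof -
  have w: "(0, Suc l) \<in> wpairs n" using l by (auto simp: wpairs_def)
  have i': "Suc i \<le> n" using i by simp
  have "g $$ (Suc i, 0) * b (Suc l) + (\<Sum>t<n. g $$ (Suc i, Suc t) * A $$ (t, l))
      = fmap n b c A (row g (Suc i)) (0, Suc l)"
    using fmap_row[OF g] i by simp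
  also have "\<dots> = (\<Sum>q<n. A $$ (i, q) * (g $$ (0, 0) * g $$ (Suc q, Suc l) - g $$ (0, Suc l) * g $$ (Suc q, 0)))"
    unfolding equivariant_row[OF eqv g i' w] using i'
    by (subst sum_wpairs_first_row) (auto simp: fmap_unit_vec)
  finally show ?thesis .
qed

lemma equivariant_top_row_eq:
  assumes eqv: "equivariant n b c A g" and g: "g \<in> carrier_mat (n + 1) (n + 1)"
    and col: "\<And>i. i < n \<Longrightarrow> g $$ (Suc i, 0) = 0" and l: "l < n"
  shows "g $$ (0, 0) * b (Suc l) + (\<Sum>t<n. g $$ (0, Suc t) * A $$ (t, l))
    = g $$ (0, 0) * (\<Sum>q<n. b (Suc q) * g $$ (Suc q, Suc l))"
proof -
  have w: "(0, Suc l) \<in> wpairs n" using l by (auto simp: wpairs_def)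
  have col': "g $$ (p, 0) = 0" if "0 < p" "p \<le> n" for p
    using col[of "p - 1"] that by simp
  have "g $$ (0, 0) * b (Suc l) + (\<Sum>t<n. g $$ (0, Suc t) * A $$ (t, l))
      = fmap n b c A (row g 0) (0, Suc l)"
    using fmap_row[OF g] by simp
  also have "\<dots> = (\<Sum>q<n. b (Suc q) * (g $$ (0, 0) * g $$ (Suc q, Suc l)))"
    unfolding equivariant_row[OF eqv g _ w, of 0, simplified]
    by (subst sum_wpairs_first_row) (auto simp: fmap_unit_vec col col' wpairs_def)
  also have "\<dots> = g $$ (0, 0) * (\<Sum>q<n. b (Suc q) * g $$ (Suc q, Suc l))"
    by (simp add: sum_distrib_left mult.left_commute)
  finally show ?thesis .
qed

text \<open>Otherwise the wedge
  equations put all rows of C D, hence of D, into a plane containing the first row, and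
  g would have rank at most 3 < n + 1.\<close>
lemma equivariant_first_row_zero:
  fixes g :: "'a::field mat"
  assumes eqv: "equivariant n b c (companion_mat m) g" and g: "g \<in> carrier_mat (n + 1) (n + 1)"
    and inv: "invertible_mat g" and n: "degree m = n" "3 \<le> n" and c0: "coeff m 0 \<noteq> 0"
    and k0: "k0 < n"
  shows "g $$ (0, Suc k0) = 0"
proof (rule ccontr)
  assume r0: "g $$ (0, Suc k0) \<noteq> 0"
  let ?C = "companion_mat m"
  define r where "r l = g $$ (0, Suc l)" for l
  define s where "s i = g $$ (Suc i, 0)" for i
  define D where "D i l = g $$ (Suc i, Suc l)" for i l
  define R where "R i l = (\<Sum>q<n. ?C $$ (i, q) * D q l)" for i l
  have "r k * R i l - r l * R i k = s i * c (Suc k) (Suc l)"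
    if "i < n" "k < l" "l < n" for i k l
    using equivariant_wedge_eq[OF eqv g that]
    by (simp add: r_def s_def D_def R_def sum_distrib_left right_diff_distrib sum_subtractf algebra_simps)
  from wedge_rows_in_plane[of k0 n r R s "\<lambda>k l. c (Suc k) (Suc l)", OF k0 _ this]
  obtain z lf mf where "\<forall>i<n. \<forall>l<n. R i l = lf i * r l + mf i * z l"
    using r0 by (auto simp: r_def)
  with companion_preimage_in_plane[OF n(1) c0, of D lf r mf z]
  obtain lf' mf' where D: "\<And>i l. i < n \<Longrightarrow> l < n \<Longrightarrow> D i l = lf' i * r l + mf' i * z l"
    by (auto simp: R_def)
  define C where "C i j = (if i = 0 then (if j = 0 then g $$ (0, 0) else if j = 1 then 1 else 0)
    else (if j = 0 then s (i - 1) else if j = 1 then lf' (i - 1) else mf' (i - 1)))" for i j :: nat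
  define y0 where "y0 j = (if j = 0 then 1 else 0 :: 'a)" for j :: nat
  define y1 where "y1 j = (if j = 0 then 0 else r (j - 1))" for j
  define y2 where "y2 j = (if j = 0 then 0 else z (j - 1))" for j
  have "\<not> invertible_mat g"
  proof (rule rank_le_3_not_invertible[OF g])
    fix i j assume ij: "i < n + 1" "j < n + 1"
    show "g $$ (i, j) = C i 0 * y0 j + C i 1 * y1 j + C i 2 * y2 j"
    proof (cases i)
      case 0
      then show ?thesis by (cases j) (auto simp: C_def y0_def y1_def y2_def r_def)
    next
      case (Suc i')
      then show ?thesis using ij D[of i' "j - 1"]
        by (cases j) (auto simp: C_def y0_def y1_def y2_def s_def D_def)
    qed
  qed (use n in simp)
  with inv show False by simp
qed

lemma equivariant_first_column_zero:
  fixes g :: "'a::field mat"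
  assumes eqv: "equivariant n b c A g" and g: "g \<in> carrier_mat (n + 1) (n + 1)"
    and row: "\<And>k. k < n \<Longrightarrow> g $$ (0, Suc k) = 0"
    and c: "1 \<le> j" "j < k" "k \<le> n" "c j k \<noteq> 0" and i: "i < n"
  shows "g $$ (Suc i, 0) = 0"
proof -
  have "g $$ (0, j) = 0" "g $$ (0, k) = 0" using row[of "j - 1"] row[of "k - 1"] c by auto
  then have "g $$ (Suc i, 0) * c j k = 0"
    using equivariant_wedge_eq[OF eqv g i, of "j - 1" "k - 1"] c by simp
  with c show ?thesis by simp
qed

lemma block_identity:
  fixes g :: "'a::comm_ring_1 mat"
  assumes g: "g \<in> carrier_mat (n + 1) (n + 1)" and a: "g $$ (0, 0) = 1"
    and row: "\<And>k. k < n \<Longrightarrow> g $$ (0, Suc k) = 0"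
    and col: "\<And>i. i < n \<Longrightarrow> g $$ (Suc i, 0) = 0"
    and D: "\<forall>i<n. \<forall>j<n. g $$ (Suc i, Suc j) = (if i = j then 1 else 0)"
  shows "g = 1\<^sub>m (n + 1)"
proof (rule eq_matI)
  fix i j assume "i < dim_row (1\<^sub>m (n + 1))" "j < dim_col (1\<^sub>m (n + 1))"
  then have ij: "i < n + 1" "j < n + 1" by auto
  show "g $$ (i, j) = 1\<^sub>m (n + 1) $$ (i, j)"
  proof (cases i)
    case 0
    then show ?thesis using ij a row by (cases j) auto
  next
    case (Suc i')
    then show ?thesis using ij col D by (cases j) auto
  qed
qed (use g in auto)

text \<open>Step 3: with g block diagonal, equivariance says D C = a C D and b D = b; the
  rigidity of the companion matrix forces a = 1 and D = I.\<close>
lemma equivariant_companion_trivial: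
  fixes e :: "'a::field \<Rightarrow> 'b::field" and g :: "'a mat"
  assumes hom: "field_hom e" and prim: "primitive_element \<alpha>" and min: "is_min_poly e \<alpha> m"
    and n: "degree m = n" "3 \<le> n"
    and b: "\<exists>i\<in>{1..n}. b i \<noteq> 0" and c: "\<exists>j k. 1 \<le> j \<and> j < k \<and> k \<le> n \<and> c j k \<noteq> 0"
    and g: "g \<in> carrier_mat (n + 1) (n + 1)" and inv: "invertible_mat g"
    and eqv: "equivariant n b c (companion_mat m) g"
  shows "g = 1\<^sub>m (n + 1)"
proof -
  let ?C = "companion_mat m"
  have c0: "coeff m 0 \<noteq> 0" using field_hom.min_poly_const_coeff[OF hom min] n by simp
  have row: "g $$ (0, Suc k) = 0" if "k < n" for k
    by (rule equivariant_first_row_zero[OF eqv g inv n c0 that])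
  obtain j k where jk: "1 \<le> j" "j < k" "k \<le> n" "c j k \<noteq> 0" using c by blast
  have col: "g $$ (Suc i, 0) = 0" if "i < n" for i
    by (rule equivariant_first_column_zero[OF eqv g row jk that])
  have a0: "g $$ (0, 0) \<noteq> 0"
  proof
    assume "g $$ (0, 0) = 0"
    then have "det g = 0" using row by (intro det_zero_row[OF g, of 0]) (auto simp: less_Suc_eq_0_disj)
    with invertible_det_nonzero[OF g inv] show False by simp
  qed
  have comm: "(\<Sum>t<n. g $$ (Suc i, Suc t) * ?C $$ (t, l))
      = g $$ (0, 0) * (\<Sum>q<n. ?C $$ (i, q) * g $$ (Suc q, Suc l))" if "i < n" "l < n" for i l
    using equivariant_first_coord_eq[OF eqv g that] row col that
    by (simp add: sum_distrib_left mult.left_commute)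
  have fixed: "(\<Sum>q<n. b (Suc q) * g $$ (Suc q, Suc l)) = b (Suc l)" if "l < n" for l
    using equivariant_top_row_eq[OF eqv g col that] row a0 by simp
  obtain i0 where i0: "1 \<le> i0" "i0 \<le> n" "b i0 \<noteq> 0" using b by auto
  then have l0: "i0 - 1 < n" "b (Suc (i0 - 1)) \<noteq> 0" by simp_all
  have "g $$ (0, 0) = 1 \<and> (\<forall>i<n. \<forall>j<n. g $$ (Suc i, Suc j) = (if i = j then 1 else 0))"
    by (rule companion_twisted_commutant[OF hom prim min n(1) _ comm fixed l0]) (use n in simp)
  then show ?thesis using block_identity[OF g _ row col] by blast
qed

theorem mainTheorem1:
  fixes p n :: nat
    and b :: "nat \<Rightarrow> 'a::{finite,field}"
    and c :: "nat \<Rightarrow> nat \<Rightarrow> 'a"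
    and e :: "'a \<Rightarrow> 'b::{finite,field}"
    and \<alpha> :: 'b
    and m :: "'a poly"
  assumes "prime p" and "card (UNIV :: 'a set) = p" and "n \<ge> 3"
    and "card (UNIV :: 'b set) = p ^ n" and "field_embedding e"
    and "primitive_element \<alpha>" and "is_min_poly e \<alpha> m"
    and "\<exists>i\<in>{1..n}. b i \<noteq> 0"
    and "\<exists>j k. 1 \<le> j \<and> j < k \<and> k \<le> n \<and> c j k \<noteq> 0"
  shows "{g \<in> carrier_mat (n+1) (n+1). invertible_mat g \<and>
            (\<forall>v \<in> carrier_vec (n+1). \<forall>kl \<in> wpairs n.
               fmap n b c (companion_mat m) (rmult v g) kl
                 = hat n g (fmap n b c (companion_mat m) v) kl)}
         = {1\<^sub>m (n+1)}"
proof -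
  have hom: "field_hom e" by (rule field_embedding_field_hom) fact
  have deg: "degree m = n" by (rule degree_min_poly[OF hom assms(6,7)]) (simp add: assms(2,4))
  show ?thesis
    unfolding equivariant_def[symmetric]
    using equivariant_companion_trivial[OF hom assms(6,7) deg assms(3,8,9)]
      invertible_one_mat equivariant_one by auto
qed

end
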